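(* Let $f:X\to Y$ be a continuous map between metric spaces, let $q:[a,b]\to X$ be a continuous path, and suppose that $p=f\circ q$ is rectifiable. Then: (1) if $q(a)\ne q(b)$, there exists $\tau\in[a,b]$ such that $\ell(p)\ge D^-_{q(\tau)}f\cdot d(q(a),q(b))$; (2) if $0<\inf_{x\in\operatorname{Im}q}D_x^-f<\infty$, then $\ell(p)\ge \inf_{x\in\operatorname{Im}q}D_x^-f\cdot\ell(q)$.
   Context: The length of a path $q:[a,b]\to X$ in a metric space is $\ell(q)=\sup\sum_{i=0}^{n-1}d(q(t_i),q(t_{i+1}))$ over all partitions $a=t_0\le\dots\le t_n=b$ (possibly $+\infty$); $q$ is rectifiable if $\ell(q)<\infty$. For a continuous map $f:X\to Y$ and a non-isolated point $x\in X$, $D_x^-f=\liminf_{z\to x,\,z\neq x}\frac{d(f(z),f(x))}{d(z,x)}\in[0,\infty]$. It is assumed that $X$ has no isolated points. *)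

theory Defs
  imports "HOL-Analysis.Analysis" "HOL-Library.Extended_Real"
begin

definition path_length :: "(real \<Rightarrow> 'a::metric_space) \<Rightarrow> real \<Rightarrow> real \<Rightarrow> ereal" where
  "path_length q a b =
     (SUP nt \<in> {(n, t). t 0 = a \<and> t n = b \<and> (\<forall>i<n. t i \<le> t (Suc i))}.
        ereal (\<Sum>i<fst nt. dist (q (snd nt i)) (q (snd nt (Suc i)))))"

definition lower_deriv :: "('a::metric_space \<Rightarrow> 'b::metric_space) \<Rightarrow> 'a \<Rightarrow> ereal" where
  "lower_deriv f x = Liminf (at x) (\<lambda>z. ereal (dist (f z) (f x) / dist z x))"

end

theory Submission
  imports Defs
begin

(* Fix L below the lower derivative of f at every point of q. The excess
   g t = l(f o q on [a,t]) - L d(q a, q t) is nondecreasing near each point, by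
   superadditivity of length and the triangle inequality, and a supremum argument makes it
   nondecreasing on [a,b]. Hence l(f o q) >= L d(q a, q b), strictly unless q is locally,
   hence globally, constant. Part (1) follows with L = l(f o q) / d(q a, q b); part (2)
   applies the bound on every piece of a partition of [a,b], with L slightly below the
   infimum of the lower derivative. *)

lemma SUP_ereal_add_SUP_le:
  fixes f g :: "_ \<Rightarrow> ereal"
  assumes "I \<noteq> {}" "J \<noteq> {}" "\<And>i. i \<in> I \<Longrightarrow> 0 \<le> f i" "\<And>j. j \<in> J \<Longrightarrow> 0 \<le> g j"
    and le: "\<And>i j. i \<in> I \<Longrightarrow> j \<in> J \<Longrightarrow> f i + g j \<le> c"
  shows "(SUP i\<in>I. f i) + (SUP j\<in>J. g j) \<le> c"
proof -
  have "(SUP i\<in>I. f i) + g j \<le> c" if "j \<in> J" for j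
  proof -
    have "g j \<noteq> -\<infinity>"
      using assms(4)[OF that] by auto
    then have "(SUP i\<in>I. f i) + g j = (SUP i\<in>I. f i + g j)"
      using SUP_ereal_add_left[OF \<open>I \<noteq> {}\<close>] by simp
    also have "\<dots> \<le> c"
      using le[OF _ that] by (rule SUP_least)
    finally show ?thesis .
  qed
  moreover have "(SUP i\<in>I. f i) \<noteq> -\<infinity>"
  proof -
    obtain i where "i \<in> I"
      using assms(1) by blast
    then have "0 \<le> (SUP i\<in>I. f i)"
      using assms(3) by (blast intro: SUP_upper2)
    then show ?thesis by auto
  qed
  ultimately show ?thesis
    using SUP_ereal_add_right[OF \<open>J \<noteq> {}\<close>, of "SUP i\<in>I. f i" g] SUP_least by metis
qed

lemma mono_on_if_locally_mono:
  fixes g :: "real \<Rightarrow> 'a::linorder"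
  assumes loc: "\<And>t. t \<in> {a..b} \<Longrightarrow>
    \<forall>\<^sub>F s in at t within {a..b}. (s \<le> t \<longrightarrow> g s \<le> g t) \<and> (t \<le> s \<longrightarrow> g t \<le> g s)"
  shows "mono_on {a..b} g"
proof (rule mono_onI)
  fix u v assume "u \<in> {a..b}" "v \<in> {a..b}" "u \<le> v"
  have "a \<le> u \<longrightarrow> v \<le> b \<longrightarrow> g u \<le> g v"
    using \<open>u \<le> v\<close>
  proof (induction rule: Bolzano)
    case (trans r s t)
    then show ?case
      by (auto intro: order_trans)
  next
    case (local x)
    then have "x \<in> {a..b}"
      using \<open>u \<in> {a..b}\<close> \<open>v \<in> {a..b}\<close> by auto
    then obtain \<delta> where "\<delta> > 0" and \<delta>: "\<And>s. s \<in> {a..b} \<Longrightarrow> s \<noteq> x \<Longrightarrow> dist s x < \<delta> \<Longrightarrow>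
        (s \<le> x \<longrightarrow> g s \<le> g x) \<and> (x \<le> s \<longrightarrow> g x \<le> g s)"
      using loc[of x] unfolding eventually_at by auto
    have "g r \<le> g s" if "r \<le> x" "x \<le> s" "s - r < \<delta>" "a \<le> r" "s \<le> b" for r s
    proof -
      have "g r \<le> g x"
        using \<delta>[of r] that \<open>x \<in> {a..b}\<close> by (cases "r = x") (auto simp: dist_real_def)
      also have "g x \<le> g s"
        using \<delta>[of s] that \<open>x \<in> {a..b}\<close> by (cases "s = x") (auto simp: dist_real_def)
      finally show ?thesis .
    qed
    with \<open>\<delta> > 0\<close> show ?case
      by blast
  qed
  then show "g u \<le> g v"
    using \<open>u \<in> {a..b}\<close> \<open>v \<in> {a..b}\<close> by simp
qed

definition partitions :: "real \<Rightarrow> real \<Rightarrow> (nat \<times> (nat \<Rightarrow> real)) set" where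
  "partitions a b = {(n, t). t 0 = a \<and> t n = b \<and> (\<forall>i<n. t i \<le> t (Suc i))}"

definition partition_sum :: "(real \<Rightarrow> 'a::metric_space) \<Rightarrow> nat \<Rightarrow> (nat \<Rightarrow> real) \<Rightarrow> real" where
  "partition_sum p n t = (\<Sum>i<n. dist (p (t i)) (p (t (Suc i))))"

lemma path_length_partitions:
  "path_length p a b = (SUP (n, t) \<in> partitions a b. ereal (partition_sum p n t))"
  by (simp add: path_length_def partitions_def partition_sum_def split_def)

lemma partition_sum_nonneg: "0 \<le> partition_sum p n t"
  by (simp add: partition_sum_def sum_nonneg)

lemma partition_mono:
  assumes "(n, t) \<in> partitions a b" "i \<le> j" "j \<le> n"
  shows "t i \<le> t j"
  using assms(2,3)
proof (induction j)
  case (Suc j)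
  with assms(1) show ?case
    by (cases "i = Suc j") (auto simp: partitions_def intro: order_trans)
qed simp

lemma partition_points:
  assumes "(n, t) \<in> partitions a b" "i \<le> n"
  shows "t i \<in> {a..b}"
  using partition_mono[OF assms(1), of 0 i] partition_mono[OF assms(1), of i n] assms
  by (auto simp: partitions_def)

lemma partitions_two_points: "a \<le> b \<Longrightarrow> (1, \<lambda>i. if i = 0 then a else b) \<in> partitions a b"
  by (simp add: partitions_def)

lemma partition_sum_le_path_length:
  "(n, t) \<in> partitions a b \<Longrightarrow> ereal (partition_sum p n t) \<le> path_length p a b"
  unfolding path_length_partitions by (rule SUP_upper2) auto

lemma dist_le_path_length: "a \<le> b \<Longrightarrow> ereal (dist (p a) (p b)) \<le> path_length p a b"
  using partition_sum_le_path_length[OF partitions_two_points] by (simp add: partition_sum_def)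

lemma path_length_nonneg: "a \<le> b \<Longrightarrow> 0 \<le> path_length p a b"
  by (rule order_trans[OF _ dist_le_path_length]) auto

lemma partitions_append:
  assumes t: "(n, t) \<in> partitions a b" and s: "(m, s) \<in> partitions b c"
  defines "u \<equiv> \<lambda>i. if i \<le> n then t i else s (i - n)"
  shows "(n + m, u) \<in> partitions a c"
    and "partition_sum p (n + m) u = partition_sum p n t + partition_sum p m s"
proof -
  have u_shift: "u (n + j) = s j" for j
    using t s by (auto simp: u_def partitions_def)
  show "(n + m, u) \<in> partitions a c"
    unfolding partitions_def
  proof (clarify, intro conjI allI impI)
    show "u 0 = a" "u (n + m) = c"
      using t s u_shift[of m] by (auto simp: u_def partitions_def)
    fix i assume "i < n + m"
    then consider "Suc i \<le> n" | j where "i = n + j" "j < m"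
      by (metis add_less_imp_less_left le_Suc_ex not_less_eq_eq)
    then show "u i \<le> u (Suc i)"
      by cases (use t s u_shift[of j] u_shift[of "Suc j"] in \<open>auto simp: u_def partitions_def\<close>)
  qed
  have "partition_sum p (n + k) u = partition_sum p n t + partition_sum p k s" for k
  proof (induction k)
    case 0
    show ?case by (simp add: partition_sum_def u_def)
  next
    case (Suc k)
    then show ?case
      using u_shift[of k] u_shift[of "Suc k"] by (simp add: partition_sum_def)
  qed
  then show "partition_sum p (n + m) u = partition_sum p n t + partition_sum p m s" .
qed

lemma path_length_superadditive:
  assumes "a \<le> b" "b \<le> c"
  shows "path_length p a b + path_length p b c \<le> path_length p a c"
  unfolding path_length_partitions[of p a b] path_length_partitions[of p b c]
proof (rule SUP_ereal_add_SUP_le)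
  show "partitions a b \<noteq> {}" "partitions b c \<noteq> {}"
    using partitions_two_points assms by blast+
  have "ereal (partition_sum p n t) + ereal (partition_sum p m s) \<le> path_length p a c"
    if "(n, t) \<in> partitions a b" "(m, s) \<in> partitions b c" for n t m s
    using partition_sum_le_path_length[OF partitions_append(1)[OF that], of p]
      partitions_append(2)[OF that, of p] by simp
  then show "(case P of (n, t) \<Rightarrow> ereal (partition_sum p n t))
      + (case Q of (n, t) \<Rightarrow> ereal (partition_sum p n t)) \<le> path_length p a c"
    if "P \<in> partitions a b" "Q \<in> partitions b c" for P Q
    using that by (auto split: prod.splits)
qed (auto simp: partition_sum_nonneg split: prod.splits)

lemma path_length_subinterval:
  assumes "a \<le> u" "u \<le> v" "v \<le> b"
  shows "path_length p u v \<le> path_length p a b"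
proof -
  have "path_length p u v \<le> path_length p a u + path_length p u v + path_length p v b"
    using assms by (simp add: add_increasing add_increasing2 path_length_nonneg)
  also have "\<dots> \<le> path_length p a b"
    using assms by (meson add_right_mono order_trans path_length_superadditive)
  finally show ?thesis .
qed

lemma sum_path_length_partition_le:
  assumes "(n, t) \<in> partitions a b"
  shows "(\<Sum>i<n. path_length p (t i) (t (Suc i))) \<le> path_length p a b"
  using assms
proof (induction n arbitrary: b)
  case 0
  then show ?case by (simp add: partitions_def path_length_nonneg)
next
  case (Suc n)
  then have "(n, t) \<in> partitions a (t n)" "a \<le> t n" "t n \<le> b"
    using partition_points[OF Suc.prems, of n] by (auto simp: partitions_def)
  then show ?case
    using Suc.IH path_length_superadditive[of a "t n" b p] Suc.prems
    by (auto simp: partitions_def intro: order_trans add_right_mono)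
qed

lemma path_length_finite:
  assumes "a \<le> u" "u \<le> v" "v \<le> b" "path_length p a b < \<infinity>"
  shows "ereal (real_of_ereal (path_length p u v)) = path_length p u v"
proof (rule ereal_real')
  have "path_length p u v < \<infinity>"
    using path_length_subinterval[OF assms(1-3)] assms(4) by (rule le_less_trans)
  then show "\<bar>path_length p u v\<bar> \<noteq> \<infinity>"
    using path_length_nonneg[OF assms(2), of p] by auto
qed

lemma real_path_length_superadditive:
  assumes "a \<le> u" "u \<le> v" "v \<le> w" "w \<le> b" "path_length p a b < \<infinity>"
  shows "real_of_ereal (path_length p u v) + real_of_ereal (path_length p v w)
    \<le> real_of_ereal (path_length p u w)"
proof -
  have "ereal (real_of_ereal (path_length p u v)) + ereal (real_of_ereal (path_length p v w))
      \<le> ereal (real_of_ereal (path_length p u w))"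
    using path_length_superadditive[OF assms(2,3), of p] assms
    by (simp only: path_length_finite[of a _ _ b p])
  then show ?thesis by simp
qed

lemma dist_le_real_path_length:
  assumes "a \<le> u" "u \<le> v" "v \<le> b" "path_length p a b < \<infinity>"
  shows "dist (p u) (p v) \<le> real_of_ereal (path_length p u v)"
  using dist_le_path_length[OF assms(2), of p] path_length_finite[OF assms] by (metis ereal_less_eq(3))

definition length_excess ::
    "('a::metric_space \<Rightarrow> 'b::metric_space) \<Rightarrow> (real \<Rightarrow> 'a) \<Rightarrow> real \<Rightarrow> real \<Rightarrow> real \<Rightarrow> real"
  where
  "length_excess f q L a t = real_of_ereal (path_length (f \<circ> q) a t) - L * dist (q a) (q t)"

lemma length_excess_increment:
  assumes "a \<le> u" "u \<le> v" "v \<le> b" "path_length (f \<circ> q) a b < \<infinity>" "0 \<le> L"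
  shows "length_excess f q L a u + (dist (f (q u)) (f (q v)) - L * dist (q u) (q v))
    \<le> length_excess f q L a v"
proof -
  have "real_of_ereal (path_length (f \<circ> q) a u) + real_of_ereal (path_length (f \<circ> q) u v)
      \<le> real_of_ereal (path_length (f \<circ> q) a v)"
    using assms by (intro real_path_length_superadditive[of a _ _ _ b]) auto
  moreover have "dist (f (q u)) (f (q v)) \<le> real_of_ereal (path_length (f \<circ> q) u v)"
    using dist_le_real_path_length[of a u v b "f \<circ> q"] assms by simp
  moreover have "L * dist (q a) (q v) \<le> L * dist (q a) (q u) + L * dist (q u) (q v)"
    using mult_left_mono[OF dist_triangle assms(5)] by (simp add: distrib_left)
  ultimately show ?thesis
    by (simp add: length_excess_def)
qed

lemma eventually_lower_deriv_gt:
  assumes "ereal L < lower_deriv f z"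
  shows "\<forall>\<^sub>F w in at z. L * dist w z < dist (f w) (f z)"
proof -
  have "\<forall>\<^sub>F w in at z. ereal L < ereal (dist (f w) (f z) / dist w z)"
    using assms unfolding lower_deriv_def by (rule less_LiminfD)
  with eventually_neq_at_within[of z z UNIV] show ?thesis
    by eventually_elim (simp add: pos_less_divide_eq)
qed

lemma eventually_lower_deriv_gt_along:
  assumes "continuous_on S q" "t \<in> S" "ereal L < lower_deriv f (q t)"
  shows "\<forall>\<^sub>F s in at t within S. q s \<noteq> q t \<longrightarrow> L * dist (q s) (q t) < dist (f (q s)) (f (q t))"
proof -
  have "\<forall>\<^sub>F w in nhds (q t). w \<noteq> q t \<longrightarrow> L * dist w (q t) < dist (f w) (f (q t))"
    using eventually_lower_deriv_gt[OF assms(3)] by (simp add: eventually_at_filter)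
  moreover have "(q \<longlongrightarrow> q t) (at t within S)"
    using assms(1,2) by (simp add: continuous_on)
  ultimately show ?thesis
    by (rule eventually_compose_filterlim)
qed

lemma length_excess_locally_mono:
  assumes contq: "continuous_on {a..b} q" and t: "t \<in> {a..b}"
    and rect: "path_length (f \<circ> q) a b < \<infinity>" and L: "0 \<le> L" "ereal L < lower_deriv f (q t)"
  defines "g \<equiv> length_excess f q L a"
  shows "\<forall>\<^sub>F s in at t within {a..b}.
    (s \<le> t \<longrightarrow> g s \<le> g t) \<and> (t \<le> s \<longrightarrow> g t \<le> g s) \<and> (q s \<noteq> q t \<longrightarrow> g s \<noteq> g t)"
proof -
  have "\<forall>\<^sub>F s in at t within {a..b}. s \<in> {a..b}"
    by (simp add: eventually_at_filter)
  with eventually_lower_deriv_gt_along[OF contq t L(2)] show ?thesis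
  proof eventually_elim
    case (elim s)
    have strict: "0 < dist (f (q s)) (f (q t)) - L * dist (q s) (q t)" if "q s \<noteq> q t"
      using elim(1) that by simp
    have weak: "0 \<le> dist (f (q s)) (f (q t)) - L * dist (q s) (q t)"
      using strict by (cases "q s = q t") (simp_all add: less_imp_le)
    have left: "g s + (dist (f (q s)) (f (q t)) - L * dist (q s) (q t)) \<le> g t" if "s \<le> t"
      using length_excess_increment[of a s t b f q L] that elim(2) t rect L(1) unfolding g_def by simp
    have right: "g t + (dist (f (q s)) (f (q t)) - L * dist (q s) (q t)) \<le> g s" if "t \<le> s"
      using length_excess_increment[of a t s b f q L] that elim(2) t rect L(1)
      unfolding g_def by (simp add: dist_commute)
    show ?case
    proof (intro conjI impI)
      show "g s \<le> g t" if "s \<le> t"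
        using left[OF that] weak by linarith
      show "g t \<le> g s" if "t \<le> s"
        using right[OF that] weak by linarith
      show "g s \<noteq> g t" if "q s \<noteq> q t"
      proof (cases "s \<le> t")
        case True
        then show ?thesis using left[OF True] strict[OF that] by linarith
      next
        case False
        then have "t \<le> s" by simp
        then show ?thesis using right strict[OF that] by linarith
      qed
    qed
  qed
qed

lemma path_length_gt_lower_deriv_mult_dist:
  fixes f :: "'a::metric_space \<Rightarrow> 'b::metric_space"
  assumes contq: "continuous_on {a..b} q" and "a \<le> b"
    and rect: "path_length (f \<circ> q) a b < \<infinity>" and "0 \<le> L"
    and D: "\<And>\<tau>. \<tau> \<in> {a..b} \<Longrightarrow> ereal L < lower_deriv f (q \<tau>)"
    and "q a \<noteq> q b"
  shows "ereal (L * dist (q a) (q b)) < path_length (f \<circ> q) a b"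
proof (rule ccontr)
  define g where "g = length_excess f q L a"
  have local: "\<forall>\<^sub>F s in at t within {a..b}.
      (s \<le> t \<longrightarrow> g s \<le> g t) \<and> (t \<le> s \<longrightarrow> g t \<le> g s) \<and> (q s \<noteq> q t \<longrightarrow> g s \<noteq> g t)"
    if "t \<in> {a..b}" for t
    unfolding g_def by (rule length_excess_locally_mono[OF contq that rect \<open>0 \<le> L\<close> D[OF that]])
  have "mono_on {a..b} g"
    by (rule mono_on_if_locally_mono, rule eventually_mono[OF local]) auto
  assume "\<not> ?thesis"
  then have "g b \<le> 0"
    using path_length_finite[of a a b b "f \<circ> q"] \<open>a \<le> b\<close> rect
    by (simp add: g_def length_excess_def) (metis ereal_less_eq(3) not_le)
  moreover have "0 \<le> g a"
    using path_length_nonneg[of a a "f \<circ> q"] by (simp add: g_def length_excess_def real_of_ereal_pos)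
  ultimately have const: "g s = g a" if "s \<in> {a..b}" for s
    using mono_onD[OF \<open>mono_on {a..b} g\<close>, of a s] mono_onD[OF \<open>mono_on {a..b} g\<close>, of s b]
      that \<open>a \<le> b\<close> by auto
  have "\<forall>\<^sub>F s in at t within {a..b}. q t = q s" if "t \<in> {a..b}" for t
  proof -
    have "\<forall>\<^sub>F s in at t within {a..b}. s \<in> {a..b}"
      by (simp add: eventually_at_filter)
    with local[OF that] show ?thesis
    proof eventually_elim
      case (elim s)
      then show ?case
        using const[of s] const[of t] that by auto
    qed
  qed
  then have "q a = q b"
    using \<open>a \<le> b\<close> by (intro connected_local_const[OF connected_Icc]) auto
  with \<open>q a \<noteq> q b\<close> show False ..
qed

lemma path_length_ge_lower_deriv_mult_dist:
  fixes f :: "'a::metric_space \<Rightarrow> 'b::metric_space"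
  assumes "continuous_on {a..b} q" "a \<le> b" "path_length (f \<circ> q) a b < \<infinity>" "0 \<le> L"
    and "\<And>\<tau>. \<tau> \<in> {a..b} \<Longrightarrow> ereal L < lower_deriv f (q \<tau>)"
  shows "ereal (L * dist (q a) (q b)) \<le> path_length (f \<circ> q) a b"
proof (cases "q a = q b")
  case True
  then show ?thesis
    using path_length_nonneg[OF \<open>a \<le> b\<close>, of "f \<circ> q"] by (metis dist_self mult_zero_right zero_ereal_def)
next
  case False
  then show ?thesis
    using path_length_gt_lower_deriv_mult_dist[OF assms] by simp
qed

lemma ex_lower_deriv_mult_dist_le_path_length:
  fixes f :: "'a::metric_space \<Rightarrow> 'b::metric_space"
  assumes contq: "continuous_on {a..b} q" and "a \<le> b"
    and rect: "path_length (f \<circ> q) a b < \<infinity>" and "q a \<noteq> q b"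
  shows "\<exists>\<tau>\<in>{a..b}. lower_deriv f (q \<tau>) * ereal (dist (q a) (q b)) \<le> path_length (f \<circ> q) a b"
proof (rule ccontr)
  define P where "P = real_of_ereal (path_length (f \<circ> q) a b)"
  define d where "d = dist (q a) (q b)"
  have P: "path_length (f \<circ> q) a b = ereal P" "0 \<le> P"
    using path_length_finite[of a a b b "f \<circ> q"] path_length_nonneg[of a b "f \<circ> q"] \<open>a \<le> b\<close> rect
    by (auto simp: P_def real_of_ereal_pos)
  have "d > 0"
    using \<open>q a \<noteq> q b\<close> by (simp add: d_def)
  assume "\<not> ?thesis"
  then have lt: "ereal P < lower_deriv f (q \<tau>) * ereal d" if "\<tau> \<in> {a..b}" for \<tau>
    using that by (auto simp: P d_def not_le)
  have D: "ereal (P / d) < lower_deriv f (q \<tau>)" if "\<tau> \<in> {a..b}" for \<tau>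
    using lt[OF that] \<open>d > 0\<close> by (cases "lower_deriv f (q \<tau>)") (auto simp: pos_divide_less_eq)
  have "ereal (P / d * d) < path_length (f \<circ> q) a b"
    using path_length_gt_lower_deriv_mult_dist[OF contq \<open>a \<le> b\<close> rect _ D \<open>q a \<noteq> q b\<close>] P \<open>d > 0\<close>
    unfolding d_def by simp
  then show False
    using \<open>d > 0\<close> P by simp
qed

lemma partition_sum_mult_le_path_length_comp:
  fixes f :: "'a::metric_space \<Rightarrow> 'b::metric_space"
  assumes contq: "continuous_on {a..b} q" and rect: "path_length (f \<circ> q) a b < \<infinity>"
    and nt: "(n, t) \<in> partitions a b" and "0 \<le> L"
    and D: "\<And>\<tau>. \<tau> \<in> {a..b} \<Longrightarrow> ereal L < lower_deriv f (q \<tau>)"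
  shows "ereal (L * partition_sum q n t) \<le> path_length (f \<circ> q) a b"
proof -
  have piece: "ereal (L * dist (q (t i)) (q (t (Suc i)))) \<le> path_length (f \<circ> q) (t i) (t (Suc i))"
    if "i < n" for i
  proof (rule path_length_ge_lower_deriv_mult_dist)
    have ti: "t i \<in> {a..b}" "t (Suc i) \<in> {a..b}" "t i \<le> t (Suc i)"
      using partition_points[OF nt, of i] partition_points[OF nt, of "Suc i"] nt that
      by (auto simp: partitions_def)
    then show "continuous_on {t i..t (Suc i)} q"
      by (auto intro: continuous_on_subset[OF contq])
    show "t i \<le> t (Suc i)"
      by (fact ti(3))
    show "path_length (f \<circ> q) (t i) (t (Suc i)) < \<infinity>"
      using path_length_subinterval[of a "t i" "t (Suc i)" b "f \<circ> q"] ti rect by auto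
    show "ereal L < lower_deriv f (q \<tau>)" if "\<tau> \<in> {t i..t (Suc i)}" for \<tau>
      using that ti by (intro D) auto
  qed (fact \<open>0 \<le> L\<close>)
  have "ereal (L * partition_sum q n t) = (\<Sum>i<n. ereal (L * dist (q (t i)) (q (t (Suc i)))))"
    by (simp add: partition_sum_def sum_distrib_left)
  also have "\<dots> \<le> (\<Sum>i<n. path_length (f \<circ> q) (t i) (t (Suc i)))"
    using piece by (intro sum_mono) simp
  also have "\<dots> \<le> path_length (f \<circ> q) a b"
    by (rule sum_path_length_partition_le[OF nt])
  finally show ?thesis .
qed

lemma mult_path_length_le_path_length_comp:
  fixes f :: "'a::metric_space \<Rightarrow> 'b::metric_space"
  assumes contq: "continuous_on {a..b} q" and "a \<le> b"
    and rect: "path_length (f \<circ> q) a b < \<infinity>" and "0 \<le> c"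
    and D: "\<And>\<tau>. \<tau> \<in> {a..b} \<Longrightarrow> ereal c \<le> lower_deriv f (q \<tau>)"
  shows "ereal c * path_length q a b \<le> path_length (f \<circ> q) a b"
proof (cases "c = 0")
  case True
  then show ?thesis
    using path_length_nonneg[OF \<open>a \<le> b\<close>] by (simp add: zero_ereal_def[symmetric])
next
  case False
  with \<open>0 \<le> c\<close> have "0 < c" by simp
  define P where "P = real_of_ereal (path_length (f \<circ> q) a b)"
  have P: "path_length (f \<circ> q) a b = ereal P"
    using path_length_finite[of a a b b "f \<circ> q"] \<open>a \<le> b\<close> rect by (simp add: P_def)
  have "c * partition_sum q n t \<le> P" if nt: "(n, t) \<in> partitions a b" for n t
    \<comment> \<open>scaling by z < 1 makes the hypothesis on c strict\<close>
  proof (rule field_le_mult_one_interval)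
    fix z :: real assume z: "0 < z" "z < 1"
    have "ereal (z * c) < lower_deriv f (q \<tau>)" if "\<tau> \<in> {a..b}" for \<tau>
    proof -
      have "ereal (z * c) < ereal c"
        using z \<open>0 < c\<close> by simp
      then show ?thesis
        using D[OF that] by (rule less_le_trans)
    qed
    then have "ereal (z * c * partition_sum q n t) \<le> path_length (f \<circ> q) a b"
      using z \<open>0 < c\<close> by (intro partition_sum_mult_le_path_length_comp[OF contq rect nt]) auto
    then show "z * (c * partition_sum q n t) \<le> P"
      using P by (simp add: mult.assoc)
  qed
  then have "(SUP (n, t) \<in> partitions a b. ereal c * ereal (partition_sum q n t)) \<le> ereal P"
    by (auto intro!: SUP_least)
  moreover have "(SUP (n, t) \<in> partitions a b. ereal c * ereal (partition_sum q n t))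
      = ereal c * path_length q a b"
    unfolding path_length_partitions[of q] using partitions_two_points[OF \<open>a \<le> b\<close>] \<open>0 \<le> c\<close>
    by (subst SUP_ereal_mult_left[symmetric]) (auto simp: partition_sum_nonneg split_def)
  ultimately show ?thesis
    using P by simp
qed

theorem theorem3:
  fixes f :: "'a::metric_space \<Rightarrow> 'b::metric_space"
    and q :: "real \<Rightarrow> 'a" and a b :: real
  assumes no_isolated: "\<And>x::'a. x islimpt (UNIV :: 'a set)"
    and contf: "continuous_on UNIV f"
    and ab: "a \<le> b"
    and contq: "continuous_on {a..b} q"
    and rect: "path_length (f \<circ> q) a b < \<infinity>"
  shows "(q a \<noteq> q b \<longrightarrow>
            (\<exists>\<tau>\<in>{a..b}. path_length (f \<circ> q) a b
                 \<ge> lower_deriv f (q \<tau>) * ereal (dist (q a) (q b))))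
       \<and> (0 < (INF x\<in>q ` {a..b}. lower_deriv f x) \<and> (INF x\<in>q ` {a..b}. lower_deriv f x) < \<infinity>
          \<longrightarrow> path_length (f \<circ> q) a b
                \<ge> (INF x\<in>q ` {a..b}. lower_deriv f x) * path_length q a b)"
proof (intro conjI impI)
  show "\<exists>\<tau>\<in>{a..b}. path_length (f \<circ> q) a b \<ge> lower_deriv f (q \<tau>) * ereal (dist (q a) (q b))"
    if "q a \<noteq> q b"
    using ex_lower_deriv_mult_dist_le_path_length[OF contq ab rect that] by simp
  let ?m = "INF x\<in>q ` {a..b}. lower_deriv f x"
  assume "0 < ?m \<and> ?m < \<infinity>"
  then obtain c where c: "?m = ereal c" "0 < c"
    by (cases ?m) auto
  have "ereal c \<le> lower_deriv f (q \<tau>)" if "\<tau> \<in> {a..b}" for \<tau>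
    unfolding c(1)[symmetric] using that by (auto intro: INF_lower)
  then show "path_length (f \<circ> q) a b \<ge> ?m * path_length q a b"
    unfolding c(1) using c(2) by (intro mult_path_length_le_path_length_comp[OF contq ab rect]) auto
qed

end
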